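(* For every state $s\in S$, the number of actions $I$ occurring in the unique path $\underline\alpha(s)$ equals the class $K(s)$.
   Context: Fix integers $M\ge1$, $q\ge 2$. The augmented state set is $\overline S=\{(b_1,\dots,b_M,d;T,t): b_m,d,T\in\mathbb Z,\ 1\le t\le M+1,\ d+T+\sum_{m=1}^M b_m=0\}$, the BDM state set is $S=\{s\in\overline S:0\le T\le M\}$, initial state $s_0=(0,\dots,0,0;0,M+1)$. Feasible transitions from $s=(b_1,\dots,b_M,d;T,t)\in S$: if $t\le M$ and $b_t>d$, action $D$ to $(b_1,\dots,b_{t-1},d,b_{t+1},\dots,b_M,b_t;T,t+1)$ or action $I$ to $(b_1,\dots,b_M,d;T,t+1)$; if $t\le M$ and $b_t=d$, action $N_=$ to $(b_1,\dots,b_M,d;T,t+1)$; if $t\le M$ and $b_t<d$, action $N_<$ to $(b_1,\dots,b_M,d;T,t+1)$; if $t=M+1,T<M$, action $d_-$ to $(b_1,\dots,b_M,d-1;T+1,1)$; if $t=M+1,T=M$, action $b_+$ to $(b_1+1,\dots,b_M+1,d;0,1)$. For each $s\in S$ there is exactly one finite path of feasible transitions from $s_0$ to $s$ that uses only actions from $\{D,I,N_=,d_-,b_+\}$ and visits $s_0$ only at its start; call it $\underline\alpha(s)$. For $s\in\overline S$ let $x=(b_1,\dots,b_{t-1},d,b_t,\dots,b_M)$, $\tilde b_1\ge\dots\ge\tilde b_{M+1}$ its entries sorted nonincreasingly, $\pi_s$ the minimum number of neighbouring transpositions sorting $x$ nonincreasingly, and $K(s)=-\pi_s+MT+2\sum_{m=1}^{M+1}\tilde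 b_m(M+1-m)$ the class of $s$. *)

theory Defs
  imports Main
begin

text \<open>A state (b_1..b_M, d; T, t) is represented as (bs, d, T, t) with
  bs the list [b_1, ..., b_M] (so b_m = bs ! (m-1)).\<close>
type_synonym state = "int list \<times> int \<times> int \<times> nat"

datatype action = ActD | ActI | ActNeq | ActNlt | ActDminus | ActBplus

definition aug_states :: "nat \<Rightarrow> state set" where
  "aug_states M = {(bs, d, T, t). length bs = M \<and> 1 \<le> t \<and> t \<le> M + 1 \<and>
                       d + T + sum_list bs = 0}"

definition bdm_states :: "nat \<Rightarrow> state set" where
  "bdm_states M = {(bs, d, T, t). (bs, d, T, t) \<in> aug_states M \<and> 0 \<le> T \<and> T \<le> int M}"

definition init_state :: "nat \<Rightarrow> state" where
  "init_state M = (replicate M 0, 0, 0, M + 1)"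

fun step :: "nat \<Rightarrow> state \<Rightarrow> action \<Rightarrow> state \<Rightarrow> bool" where
  "step M (bs, d, T, t) a s' \<longleftrightarrow>
     (t \<le> M \<and> bs ! (t - 1) > d \<and> a = ActD \<and> s' = (bs[t - 1 := d], bs ! (t - 1), T, t + 1)) \<or>
     (t \<le> M \<and> bs ! (t - 1) > d \<and> a = ActI \<and> s' = (bs, d, T, t + 1)) \<or>
     (t \<le> M \<and> bs ! (t - 1) = d \<and> a = ActNeq \<and> s' = (bs, d, T, t + 1)) \<or>
     (t \<le> M \<and> bs ! (t - 1) < d \<and> a = ActNlt \<and> s' = (bs, d, T, t + 1)) \<or>
     (t = M + 1 \<and> T < int M \<and> a = ActDminus \<and> s' = (bs, d - 1, T + 1, 1)) \<or>
     (t = M + 1 \<and> T = int M \<and> a = ActBplus \<and> s' = (map (\<lambda>x. x + 1) bs, d, 0, 1))"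

fun is_path :: "nat \<Rightarrow> state \<Rightarrow> (action \<times> state) list \<Rightarrow> bool" where
  "is_path M s [] = True"
| "is_path M s ((a, s') # rest) \<longleftrightarrow> s \<in> bdm_states M \<and> step M s a s' \<and> is_path M s' rest"

definition path_end :: "state \<Rightarrow> (action \<times> state) list \<Rightarrow> state" where
  "path_end s p = (if p = [] then s else snd (last p))"

definition good_path :: "nat \<Rightarrow> state \<Rightarrow> (action \<times> state) list \<Rightarrow> bool" where
  "good_path M s p \<longleftrightarrow> is_path M (init_state M) p \<and> path_end (init_state M) p = s \<and>
     (\<forall>(a, u) \<in> set p. a \<in> {ActD, ActI, ActNeq, ActDminus, ActBplus} \<and> u \<noteq> init_state M)"

definition alpha :: "nat \<Rightarrow> state \<Rightarrow> (action \<times> state) list" where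
  "alpha M s = (THE p. good_path M s p)"

definition count_I :: "(action \<times> state) list \<Rightarrow> nat" where
  "count_I p = length (filter (\<lambda>(a, _). a = ActI) p)"

definition xvec :: "state \<Rightarrow> int list" where
  "xvec s = (case s of (bs, d, T, t) \<Rightarrow> take (t - 1) bs @ [d] @ drop (t - 1) bs)"

definition adj_swap :: "nat \<Rightarrow> int list \<Rightarrow> int list" where
  "adj_swap i xs = xs[i := xs ! Suc i, Suc i := xs ! i]"

definition min_adj_swaps :: "int list \<Rightarrow> nat" where
  "min_adj_swaps xs = (LEAST n. \<exists>is. length is = n \<and> (\<forall>i \<in> set is. Suc i < length xs) \<and>
        sorted_wrt (\<ge>) (fold adj_swap is xs))"

definition class_K :: "nat \<Rightarrow> state \<Rightarrow> int" where
  "class_K M s = (case s of (bs, d, T, t) \<Rightarrow>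
     (let x = xvec s; bt = rev (sort x) in
       - int (min_adj_swaps x) + int M * T +
       2 * (\<Sum>m = 1..M + 1. bt ! (m - 1) * int (M + 1 - m))))"

end

theory Submission
  imports Defs "HOL-Library.Multiset"
begin

text \<open>For the vector x of a state s consider the potential
  Phi(s) = sum over i < j of |x_i - x_j| - [x_i < x_j].
  Twice the weighted sum of the sorted entries occurring in K(s) equals the sum of all
  |x_i - x_j| minus M T, and pi_s counts the pairs i < j with x_i < x_j; hence Phi(s) = K(s).
  Along the permitted transitions, D and N_= leave x unchanged, I swaps an adjacent pair
  x_i < x_(i+1) and so raises Phi by exactly one, and d_- and b_+ rotate x (with a constant
  shift), which preserves Phi.  So every permitted path from s_0 to s contains
  Phi(s) - Phi(s_0) = K(s) actions I.
  The path alpha(s) is unique since every state has exactly one permitted predecessor.  It exists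
  since going back along predecessors strictly decreases Phi or, for fixed Phi, a bounded rank,
  until s_0 is reached.\<close>

section \<open>Sums over pairs and inversions\<close>

fun pair_sum :: "(int \<Rightarrow> int \<Rightarrow> int) \<Rightarrow> int list \<Rightarrow> int" where
  "pair_sum g [] = 0"
| "pair_sum g (a # xs) = (\<Sum>y\<leftarrow>xs. g a y) + pair_sum g xs"

lemma pair_sum_swap:
  "pair_sum g (P @ a # b # Q) = pair_sum g (P @ b # a # Q) + g a b - g b a"
  by (induction P) auto

lemma pair_sum_snoc: "pair_sum g (xs @ [d]) = pair_sum g xs + (\<Sum>y\<leftarrow>xs. g y d)"
  by (induction xs) auto

lemma pair_sum_shift:
  assumes "\<And>a b. g (a + c) (b + c) = g a b"
  shows "pair_sum g (map (\<lambda>v. v + c) xs) = pair_sum g xs"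
  by (induction xs) (auto simp: assms o_def)

lemma pair_sum_diff: "pair_sum (\<lambda>a b. g a b - h a b) xs = pair_sum g xs - pair_sum h xs"
  by (induction xs) (auto simp: sum_list_subtractf)

lemma pair_sum_nonneg: "(\<And>a b. g a b \<ge> 0) \<Longrightarrow> pair_sum g xs \<ge> 0"
  by (induction xs) (auto intro!: add_nonneg_nonneg sum_list_nonneg)

lemma pair_sum_double:
  assumes "\<And>a b. g a b = g b a"
  shows "2 * pair_sum g xs = (\<Sum>u\<leftarrow>xs. \<Sum>v\<leftarrow>xs. g u v) - (\<Sum>u\<leftarrow>xs. g u u)"
  by (induction xs) (auto simp: sum_list_addf assms algebra_simps)

lemma pair_sum_mset_eq:
  assumes "\<And>a b. g a b = g b a" and "mset xs = mset ys"
  shows "pair_sum g xs = pair_sum g ys"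
proof -
  have sum_eq: "(\<Sum>u\<leftarrow>xs. f u) = (\<Sum>u\<leftarrow>ys. f u)" for f :: "int \<Rightarrow> int"
    by (metis assms(2) mset_map sum_mset_sum_list)
  have "2 * pair_sum g xs = 2 * pair_sum g ys"
    unfolding pair_sum_double[of g, OF assms(1)] sum_eq ..
  then show ?thesis by simp
qed

lemma length_adj_swap [simp]: "length (adj_swap i xs) = length xs"
  by (simp add: adj_swap_def)

lemma adj_swap_append: "adj_swap (length P) (P @ u # v # Q) = P @ v # u # Q"
  by (simp add: adj_swap_def list_update_append nth_append)

lemma split_at_adjacent:
  assumes "Suc i < length xs"
  obtains P u v Q where "xs = P @ u # v # Q" and "length P = i"
proof
  show "xs = take i xs @ xs ! i # xs ! Suc i # drop (Suc (Suc i)) xs"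
    using assms by (simp add: Cons_nth_drop_Suc)
qed (use assms in simp)

definition inversions :: "int list \<Rightarrow> int" where
  "inversions = pair_sum (\<lambda>a b. of_bool (a < b))"

lemma inversions_nonneg: "inversions xs \<ge> 0"
  unfolding inversions_def by (rule pair_sum_nonneg) simp

lemma inversions_eq_0_iff: "inversions xs = 0 \<longleftrightarrow> sorted_wrt (\<ge>) xs"
proof (induction xs)
  case (Cons a xs)
  have "(\<Sum>y\<leftarrow>xs. of_bool (a < y) :: int) = 0 \<longleftrightarrow>
      (\<forall>v\<in>set (map (\<lambda>y. of_bool (a < y)) xs). v = (0::int))"
    by (rule sum_list_nonneg_eq_0_iff) auto
  also have "\<dots> \<longleftrightarrow> (\<forall>y\<in>set xs. y \<le> a)"
    by (auto simp: not_less)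
  finally have "(\<Sum>y\<leftarrow>xs. of_bool (a < y) :: int) = 0 \<longleftrightarrow> (\<forall>y\<in>set xs. y \<le> a)" .
  moreover have "(\<Sum>y\<leftarrow>xs. of_bool (a < y) :: int) \<ge> 0"
    by (rule sum_list_nonneg) auto
  ultimately show ?case
    using Cons.IH inversions_nonneg[of xs] by (auto simp: inversions_def)
qed (simp add: inversions_def)

lemma inversions_adj_swap:
  assumes "Suc i < length xs"
  shows "inversions (adj_swap i xs) =
    inversions xs - of_bool (xs ! i < xs ! Suc i) + of_bool (xs ! Suc i < xs ! i)"
proof -
  obtain P u v Q where xs: "xs = P @ u # v # Q" and i: "length P = i"
    using split_at_adjacent[OF assms] .
  have "adj_swap i xs = P @ v # u # Q"
    unfolding xs i[symmetric] by (rule adj_swap_append)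
  then show ?thesis
    using pair_sum_swap[of _ P u v Q] i by (simp add: inversions_def xs nth_append)
qed

lemma inversions_fold_adj_swap_ge:
  "\<forall>i\<in>set is. Suc i < length xs \<Longrightarrow>
    inversions (fold adj_swap is xs) \<ge> inversions xs - int (length is)"
proof (induction "is" arbitrary: xs)
  case (Cons i "is")
  have "inversions (adj_swap i xs) \<ge> inversions xs - 1"
    using Cons.prems by (simp add: inversions_adj_swap)
  moreover have
    "inversions (fold adj_swap is (adj_swap i xs)) \<ge> inversions (adj_swap i xs) - int (length is)"
    using Cons.prems by (intro Cons.IH) simp
  ultimately show ?case by simp
qed simp

lemma sorting_by_inversions_swaps:
  "\<exists>is. length is = nat (inversions xs) \<and> (\<forall>i\<in>set is. Suc i < length xs) \<and>
        sorted_wrt (\<ge>) (fold adj_swap is xs)"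
proof (induction "nat (inversions xs)" arbitrary: xs)
  case 0
  then have "sorted_wrt (\<ge>) xs"
    using inversions_nonneg[of xs] inversions_eq_0_iff[of xs] by simp
  then show ?case using 0 by (intro exI[of _ "[]"]) simp
next
  case (Suc n)
  then have "inversions xs \<noteq> 0" by auto
  then have "\<not> sorted_wrt (\<ge>) xs" by (simp add: inversions_eq_0_iff)
  then obtain i where i: "Suc i < length xs" "xs ! i < xs ! Suc i"
    by (auto simp: sorted_wrt_iff_nth_Suc_transp transp_def not_le)
  then have "inversions (adj_swap i xs) = inversions xs - 1"
    by (simp add: inversions_adj_swap)
  then have n: "n = nat (inversions (adj_swap i xs))" using Suc.hyps(2) by simp
  from Suc.hyps(1)[OF n] obtain "is" where "length is = n" "\<forall>j\<in>set is. Suc j < length xs"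
    "sorted_wrt (\<ge>) (fold adj_swap is (adj_swap i xs))"
    using n by auto
  then show ?case using i Suc.hyps(2) by (intro exI[of _ "i # is"]) auto
qed

lemma min_adj_swaps_eq_inversions: "int (min_adj_swaps xs) = inversions xs"
proof -
  have "min_adj_swaps xs = nat (inversions xs)"
    unfolding min_adj_swaps_def
  proof (rule Least_equality)
    fix n assume "\<exists>is. length is = n \<and> (\<forall>i\<in>set is. Suc i < length xs) \<and>
        sorted_wrt (\<ge>) (fold adj_swap is xs)"
    then obtain "is" where "length is = n" "\<forall>i\<in>set is. Suc i < length xs"
      "inversions (fold adj_swap is xs) = 0"
      by (auto simp: inversions_eq_0_iff)
    then show "nat (inversions xs) \<le> n"
      using inversions_fold_adj_swap_ge[of "is" xs] by simp
  qed (rule sorting_by_inversions_swaps)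
  then show ?thesis using inversions_nonneg[of xs] by simp
qed

lemma weighted_sum_Cons:
  "(\<Sum>m = 1..Suc k. (a # ys) ! (m - 1) * int (Suc k - m)) =
    a * int k + (\<Sum>m = 1..k. ys ! (m - 1) * int (k - m))"
proof -
  have "(\<Sum>m = 1..Suc k. (a # ys) ! (m - 1) * int (Suc k - m)) =
      a * int k + (\<Sum>m = Suc 1..Suc k. (a # ys) ! (m - 1) * int (Suc k - m))"
    by (subst sum.atLeast_Suc_atMost) auto
  also have "(\<Sum>m = Suc 1..Suc k. (a # ys) ! (m - 1) * int (Suc k - m)) =
      (\<Sum>m = 1..k. ys ! (m - 1) * int (k - m))"
    by (subst sum.shift_bounds_cl_Suc_ivl) (rule sum.cong, auto simp: nth_Cons')
  finally show ?thesis .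
qed

lemma weighted_sum_sorted:
  "sorted_wrt (\<ge>) ys \<Longrightarrow>
   2 * (\<Sum>m = 1..length ys. ys ! (m - 1) * int (length ys - m)) =
     pair_sum (\<lambda>a b. \<bar>a - b\<bar>) ys + int (length ys - 1) * sum_list ys"
proof (induction ys)
  case (Cons a ys)
  let ?k = "length ys"
  have "(\<Sum>y\<leftarrow>ys. \<bar>a - y\<bar>) = (\<Sum>y\<leftarrow>ys. a - y)"
    using Cons.prems by (intro arg_cong[where f = sum_list] map_cong) auto
  also have "\<dots> = int ?k * a - sum_list ys"
    by (simp add: sum_list_subtractf sum_list_triv)
  finally have "(\<Sum>y\<leftarrow>ys. \<bar>a - y\<bar>) = int ?k * a - sum_list ys" .
  moreover have "int (?k - 1) * sum_list ys = (int ?k - 1) * sum_list ys"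
    by (cases ys) auto
  ultimately show ?case
    using Cons weighted_sum_Cons[where k = ?k and a = a and ys = ys] by (simp add: algebra_simps)
qed simp

section \<open>The potential\<close>

definition pair_weight :: "int \<Rightarrow> int \<Rightarrow> int" where
  "pair_weight a b = \<bar>a - b\<bar> - of_bool (a < b)"

lemma pair_weight_eq: "pair_weight a b = (if b \<le> a then a - b else b - a - 1)"
  by (simp add: pair_weight_def)

definition potential :: "state \<Rightarrow> int" where
  "potential s = pair_sum pair_weight (xvec s)"

lemma xvec_simp [simp]: "xvec (bs, d, T, t) = take (t - 1) bs @ d # drop (t - 1) bs"
  by (simp add: xvec_def)

lemma xvec_ne_Nil [simp]: "xvec s \<noteq> []"
  by (cases s) simp

lemma class_K_eq_potential:
  assumes "s \<in> aug_states M"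
  shows "class_K M s = potential s"
proof -
  obtain bs d T t where s: "s = (bs, d, T, t)" by (cases s)
  have len: "length bs = M" and sum: "d + T + sum_list bs = 0" and t: "1 \<le> t" "t \<le> M + 1"
    using assms by (auto simp: s aug_states_def)
  define x where "x = xvec s"
  define sx where "sx = rev (sort x)"
  have "sum_list x = sum_list bs + d"
    by (simp add: x_def s) (metis append_take_drop_id sum_list_append)
  with sum have sum_x: "sum_list x = - T" by simp
  have len_x: "length x = M + 1" using len t by (simp add: x_def s)
  have "mset sx = mset x" by (simp add: sx_def)
  then have "pair_sum (\<lambda>a b. \<bar>a - b\<bar>) sx = pair_sum (\<lambda>a b. \<bar>a - b\<bar>) x"
    and "sum_list sx = sum_list x" and "length sx = length x"
    by (auto intro: pair_sum_mset_eq dest: mset_eq_length) (metis sum_mset_sum_list)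
  moreover have "sorted_wrt (\<ge>) sx" by (simp add: sx_def sorted_wrt_rev)
  ultimately have "2 * (\<Sum>m = 1..M + 1. sx ! (m - 1) * int (M + 1 - m)) =
      pair_sum (\<lambda>a b. \<bar>a - b\<bar>) x - int M * T"
    using weighted_sum_sorted[of sx] len_x sum_x by simp
  moreover have "pair_sum pair_weight x = pair_sum (\<lambda>a b. \<bar>a - b\<bar>) x - inversions x"
    using pair_sum_diff[of "\<lambda>a b. \<bar>a - b\<bar>" "\<lambda>a b. of_bool (a < b)" x]
    by (simp add: inversions_def pair_weight_def[abs_def])
  moreover have "class_K M s =
      - inversions x + int M * T + 2 * (\<Sum>m = 1..M + 1. sx ! (m - 1) * int (M + 1 - m))"
    by (simp add: class_K_def s x_def sx_def Let_def min_adj_swaps_eq_inversions del: xvec_simp)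
  ultimately show ?thesis by (simp add: potential_def x_def)
qed

lemma pair_sum_pair_weight_nonneg: "pair_sum pair_weight xs \<ge> 0"
  by (rule pair_sum_nonneg) (simp add: pair_weight_eq)

lemma pair_sum_pair_weight_shift:
  "pair_sum pair_weight (map (\<lambda>v. v + c) xs) = pair_sum pair_weight xs"
  by (rule pair_sum_shift) (simp add: pair_weight_def)

lemma pair_sum_pair_weight_flat:
  "sorted xs \<Longrightarrow> \<forall>z\<in>set xs. c \<le> z \<and> z \<le> c + 1 \<Longrightarrow> pair_sum pair_weight xs = 0"
proof (induction xs)
  case (Cons a xs)
  then have "(\<Sum>y\<leftarrow>xs. pair_weight a y) = (\<Sum>y\<leftarrow>xs. 0)"
    by (intro arg_cong[where f = sum_list] map_cong) (auto simp: pair_weight_eq)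
  with Cons show ?case by simp
qed simp

lemma pair_sum_pair_weight_Cons_eq_0:
  assumes "pair_sum pair_weight (a # xs) = 0"
  shows "\<forall>z\<in>set xs. a \<le> z \<and> z \<le> a + 1"
proof -
  have "(\<Sum>y\<leftarrow>xs. pair_weight a y) \<ge> 0"
    by (rule sum_list_nonneg) (auto simp: pair_weight_eq)
  then have "(\<Sum>y\<leftarrow>xs. pair_weight a y) = 0"
    using assms pair_sum_pair_weight_nonneg[of xs] by simp
  then have "\<forall>v\<in>set (map (pair_weight a) xs). v = 0"
    by (subst (asm) sum_list_nonneg_eq_0_iff) (auto simp: pair_weight_eq)
  then have "pair_weight a z = 0" if "z \<in> set xs" for z
    using that by simp
  then show ?thesis by (force simp: pair_weight_eq split: if_splits)
qed

lemma potential_init_state: "potential (init_state M) = 0"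
proof -
  have "xvec (init_state M) = replicate (Suc M) 0"
    by (simp add: init_state_def replicate_append_same)
  then show ?thesis
    unfolding potential_def
    by (simp add: pair_sum_pair_weight_flat[where c = 0] pair_weight_eq sum_list_replicate)
qed

text \<open>Up to a constant shift, d_- and b_+ act on the vector x of a state as the inverse of
  rotate_lift.\<close>

definition rotate_lift :: "int list \<Rightarrow> int list" where
  "rotate_lift xs = tl xs @ [hd xs + 1]"

lemma pair_sum_rotate_lift:
  assumes "xs \<noteq> []"
  shows "pair_sum pair_weight (rotate_lift xs) = pair_sum pair_weight xs"
proof -
  obtain a r where xs: "xs = a # r" using assms by (cases xs) auto
  have "(\<Sum>y\<leftarrow>r. pair_weight y (a + 1)) = (\<Sum>y\<leftarrow>r. pair_weight a y)"
    by (intro arg_cong[where f = sum_list] map_cong) (auto simp: pair_weight_eq)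
  then show ?thesis by (simp add: xs rotate_lift_def pair_sum_snoc)
qed

lemma potential_eq_if_rotate_lift:
  assumes "rotate_lift (xvec s') = map (\<lambda>v. v + c) (xvec s)"
  shows "potential s' = potential s"
  using pair_sum_rotate_lift[of "xvec s'"] pair_sum_pair_weight_shift[of c "xvec s"]
  by (simp add: potential_def assms del: xvec_simp)

lemma rotate_lift_xvec_dminus:
  "rotate_lift (xvec (bs, d - 1, T', 1)) = xvec (bs, d, T, length bs + 1)"
  by (simp add: rotate_lift_def)

lemma rotate_lift_xvec_bplus:
  "rotate_lift (xvec (map (\<lambda>x. x + 1) bs, d, T', 1)) =
    map (\<lambda>v. v + 1) (xvec (bs, d, T, length bs + 1))"
  by (simp add: rotate_lift_def)

section \<open>Transitions\<close>

definition good_actions :: "action set" where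
  "good_actions = {ActD, ActI, ActNeq, ActDminus, ActBplus}"

lemma bdm_statesD:
  "(bs, d, T, t) \<in> bdm_states M \<Longrightarrow>
    length bs = M \<and> 1 \<le> t \<and> t \<le> M + 1 \<and> d + T + sum_list bs = 0 \<and> 0 \<le> T \<and> T \<le> int M"
  by (simp add: bdm_states_def aug_states_def)

lemma step_goodE:
  assumes "(bs, d, T, t) \<in> bdm_states M" and "step M (bs, d, T, t) a s'" and "a \<in> good_actions"
  obtains (D) k where "t = Suc k" "k < length bs" "d < bs ! k" "a = ActD"
      "s' = (bs[k := d], bs ! k, T, Suc (Suc k))"
  | (I) k where "t = Suc k" "k < length bs" "d < bs ! k" "a = ActI" "s' = (bs, d, T, Suc (Suc k))"
  | (Neq) k where "t = Suc k" "k < length bs" "bs ! k = d" "a = ActNeq"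
      "s' = (bs, d, T, Suc (Suc k))"
  | (Dminus) "t = length bs + 1" "T < int (length bs)" "a = ActDminus" "s' = (bs, d - 1, T + 1, 1)"
  | (Bplus) "t = length bs + 1" "T = int (length bs)" "a = ActBplus"
      "s' = (map (\<lambda>x. x + 1) bs, d, 0, 1)"
proof (cases "t \<le> M")
  case True
  moreover have "length bs = M" "1 \<le> t" using bdm_statesD[OF assms(1)] by auto
  ultimately obtain k where "t = Suc k" "k < length bs" by (cases t) auto
  then show ?thesis
    using assms(2,3) that(1-3) \<open>length bs = M\<close> by (auto simp: good_actions_def)
next
  case False
  then show ?thesis
    using assms(2,3) that(4,5) bdm_statesD[OF assms(1)] by (auto simp: good_actions_def)
qed

lemma xvec_at:
  "k < length bs \<Longrightarrow> xvec (bs, d, T, Suc k) = take k bs @ d # bs ! k # drop (Suc k) bs"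
  by (simp add: Cons_nth_drop_Suc)

lemma xvec_after:
  "k < length bs \<Longrightarrow> xvec (bs, d, T, Suc (Suc k)) = take k bs @ bs ! k # d # drop (Suc k) bs"
  by (simp add: take_Suc_conv_app_nth)

lemma xvec_exchange:
  "k < length bs \<Longrightarrow> xvec (bs[k := d], bs ! k, T, Suc (Suc k)) = xvec (bs, d, T, Suc k)"
  by (simp add: take_Suc_conv_app_nth take_update_cancel drop_update_cancel Cons_nth_drop_Suc)

lemma potential_step:
  assumes "s \<in> bdm_states M" "step M s a s'" "a \<in> good_actions"
  shows "potential s' = potential s + of_bool (a = ActI)"
proof -
  obtain bs d T t where s: "s = (bs, d, T, t)" by (cases s)
  from assms[unfolded s] show ?thesis
  proof (cases rule: step_goodE)
    case (D k)
    then show ?thesis by (simp add: s potential_def xvec_exchange del: xvec_simp)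
  next
    case (I k)
    then show ?thesis
      using pair_sum_swap[of pair_weight "take k bs" "bs ! k" d "drop (Suc k) bs"]
      by (simp add: s potential_def xvec_at xvec_after pair_weight_eq del: xvec_simp)
  next
    case (Neq k)
    then show ?thesis by (simp add: s potential_def xvec_at xvec_after del: xvec_simp)
  next
    case Dminus
    then show ?thesis
      using potential_eq_if_rotate_lift[where c = 0] rotate_lift_xvec_dminus by (simp add: s)
  next
    case Bplus
    then show ?thesis
      using potential_eq_if_rotate_lift[where c = 1] rotate_lift_xvec_bplus by (simp add: s)
  qed
qed

section \<open>Uniqueness of the path\<close>

lemma sum_list_update_int:
  "k < length xs \<Longrightarrow> sum_list (xs[k := x]) = sum_list xs + x - xs ! k" for xs :: "int list"
  by (induction xs arbitrary: k) (auto split: nat.splits)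

definition pred_state :: "nat \<Rightarrow> state \<Rightarrow> state" where
  "pred_state M s = (case s of (bs, d, T, t) \<Rightarrow>
     if 2 \<le> t then
       (if bs ! (t - 2) < d then (bs[t - 2 := d], bs ! (t - 2), T, t - 1) else (bs, d, T, t - 1))
     else if 1 \<le> T then (bs, d + 1, T - 1, M + 1)
     else (map (\<lambda>x. x - 1) bs, d, int M, M + 1))"

definition pred_action :: "nat \<Rightarrow> state \<Rightarrow> action" where
  "pred_action M s = (case s of (bs, d, T, t) \<Rightarrow>
     if 2 \<le> t then (if bs ! (t - 2) < d then ActD else if bs ! (t - 2) = d then ActNeq else ActI)
     else if 1 \<le> T then ActDminus else ActBplus)"

lemma pred_of_good_step:
  assumes "u \<in> bdm_states M" "step M u a s" "a \<in> good_actions"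
  shows "pred_state M s = u \<and> pred_action M s = a"
proof -
  obtain bs d T t where u: "u = (bs, d, T, t)" by (cases u)
  have "length bs = M" "0 \<le> T" using assms(1) u bdm_statesD by blast+
  with assms[unfolded u] show ?thesis
    by (cases rule: step_goodE) (auto simp: u pred_state_def pred_action_def o_def)
qed

lemma pred_state_step:
  assumes "s \<in> bdm_states M"
  shows "pred_state M s \<in> bdm_states M \<and> step M (pred_state M s) (pred_action M s) s \<and>
    pred_action M s \<in> good_actions"
proof -
  obtain bs d T t where s: "s = (bs, d, T, t)" by (cases s)
  have B: "length bs = M" "1 \<le> t" "t \<le> M + 1" "d + T + sum_list bs = 0" "0 \<le> T" "T \<le> int M"
    using bdm_statesD assms s by blast+
  note unfold = s pred_state_def pred_action_def bdm_states_def aug_states_def good_actions_def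
  consider (inner) k where "t = Suc (Suc k)" "k < M" | (first) "t = 1"
  proof (cases t)
    case (Suc t')
    then show ?thesis using B that by (cases t') auto
  qed (use B in simp)
  then show ?thesis
  proof cases
    case inner
    show ?thesis
    proof (cases "bs ! k < d")
      case True
      have "sum_list (bs[k := d]) = sum_list bs + d - bs ! k"
        using inner B by (simp add: sum_list_update_int)
      then show ?thesis using inner B True by (simp add: unfold)
    next
      case False
      then show ?thesis using inner B by (simp add: unfold)
    qed
  next
    case first
    show ?thesis
    proof (cases "1 \<le> T")
      case True
      then show ?thesis using first B by (simp add: unfold)
    next
      case False
      have "sum_list (map (\<lambda>x. x - 1) bs) = sum_list bs - int M"
        using B by (simp add: sum_list_subtractf sum_list_triv)
      then show ?thesis using first B False by (simp add: unfold o_def)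
    qed
  qed
qed

lemma good_path_iff:
  "good_path M s p \<longleftrightarrow> is_path M (init_state M) p \<and> path_end (init_state M) p = s \<and>
     (\<forall>(a, u) \<in> set p. a \<in> good_actions \<and> u \<noteq> init_state M)"
  by (simp add: good_path_def good_actions_def)

lemma good_path_Nil: "good_path M s [] \<longleftrightarrow> s = init_state M"
  by (auto simp: good_path_def path_end_def)

section \<open>Existence of the path\<close>

lemma rotate_lift_shift:
  "xs \<noteq> [] \<Longrightarrow> rotate_lift (map (\<lambda>v. v + c) xs) = map (\<lambda>v. v + c) (rotate_lift xs)"
  by (cases xs) (simp_all add: rotate_lift_def)

lemma sorted_shift: "sorted (map (\<lambda>v. v + c) xs) = sorted (xs :: int list)"
  by (simp add: sorted_map)

lemma sorted_rotate_lift_twice: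
  assumes "2 \<le> length xs" "sorted (rotate_lift xs)" "sorted (rotate_lift (rotate_lift xs))"
  shows "pair_sum pair_weight xs = 0"
proof -
  obtain a b r where xs: "xs = a # b # r"
    using assms(1) by (cases xs rule: remdups_adj.cases) auto
  have "sorted (b # r)" "\<forall>z\<in>set (b # r). z \<le> a + 1" "a \<le> b"
    using assms(2,3) by (auto simp: xs rotate_lift_def sorted_append)
  then have "sorted xs" "\<forall>z\<in>set xs. a \<le> z \<and> z \<le> a + 1"
    by (auto simp: xs)
  then show ?thesis by (rule pair_sum_pair_weight_flat)
qed

lemma is_path_snoc:
  "is_path M s (p @ [(a, s')]) \<longleftrightarrow>
   is_path M s p \<and> path_end s p \<in> bdm_states M \<and> step M (path_end s p) a s'"
  by (induction p arbitrary: s) (auto simp: path_end_def)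

lemma path_end_snoc [simp]: "path_end s (p @ [(a, s')]) = s'"
  by (simp add: path_end_def)

lemma count_I_eq_potential_diff:
  "is_path M s p \<Longrightarrow> \<forall>(a, u)\<in>set p. a \<in> good_actions \<Longrightarrow>
   int (count_I p) = potential (path_end s p) - potential s"
proof (induction p arbitrary: s)
  case (Cons au p)
  obtain a u where au: "au = (a, u)" by (cases au)
  then have "int (count_I p) = potential (path_end u p) - potential u"
    using Cons by auto
  moreover have "potential u = potential s + of_bool (a = ActI)"
    using Cons.prems au by (intro potential_step[of s M]) auto
  ultimately show ?case by (simp add: au count_I_def path_end_def)
qed (simp add: count_I_def path_end_def)

lemma good_path_snoc:
  "good_path M s (p @ [(a, s')]) \<longleftrightarrow>
    s' = s \<and> s \<noteq> init_state M \<and> a \<in> good_actions \<and> good_path M (path_end (init_state M) p) p \<and>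
    path_end (init_state M) p \<in> bdm_states M \<and> step M (path_end (init_state M) p) a s"
  by (auto simp: good_path_iff is_path_snoc)

lemma good_path_unique: "good_path M s p \<Longrightarrow> good_path M s q \<Longrightarrow> p = q"
proof (induction p arbitrary: s q rule: rev_induct)
  case Nil
  then have "s = init_state M" by (simp add: good_path_def path_end_def)
  with Nil.prems(2) show ?case
    by (cases q rule: rev_cases) (auto simp: good_path_snoc)
next
  case (snoc x p)
  obtain a where x: "x = (a, s)"
    using snoc.prems(1) by (cases x) (simp add: good_path_snoc)
  have "s \<noteq> init_state M"
    using snoc.prems(1) x by (simp add: good_path_snoc)
  then obtain q' a' where q: "q = q' @ [(a', s)]"
    using snoc.prems(2) by (cases q rule: rev_cases) (auto simp: good_path_def path_end_def)
  have "pred_state M s = path_end (init_state M) p \<and> pred_action M s = a"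
    using snoc.prems(1) unfolding x by (intro pred_of_good_step) (simp_all add: good_path_snoc)
  moreover have "pred_state M s = path_end (init_state M) q' \<and> pred_action M s = a'"
    using snoc.prems(2) unfolding q by (intro pred_of_good_step) (simp_all add: good_path_snoc)
  ultimately have "good_path M (pred_state M s) p" "good_path M (pred_state M s) q'" "a = a'"
    using snoc.prems x q by (auto simp: good_path_snoc)
  then show ?case using snoc.IH x q by simp
qed

definition sorted_layer :: "int list \<Rightarrow> nat \<Rightarrow> nat" where
  "sorted_layer x t =
    (if \<not> sorted (take t x) then 0 else if \<not> sorted (rotate_lift x) then 1 else 2)"

text \<open>Going backwards along an action other than I keeps Phi fixed.  Inside a round x stays
  fixed too and t drops by one; as such a step needs x_(t-1) <= x_t, the layer does not change.
  Going back across a wrap-around replaces x by a shift of rotate_lift x, and the layer drops,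
  because rotate_lift x and rotate_lift (rotate_lift x) are both sorted only if Phi = 0.  For
  Phi = 0 the counter T, with T = 0 counted as the largest, plays the role of the layer.\<close>

definition descent_rank :: "nat \<Rightarrow> state \<Rightarrow> nat" where
  "descent_rank M s = (case s of (bs, d, T, t) \<Rightarrow>
     if potential s = 0 then (M + 1) * (if T = 0 then M else nat T - 1) + t
     else (M + 1) * sorted_layer (xvec s) t + t)"

lemma sorted_take_Suc_Suc:
  "Suc k < length x \<Longrightarrow>
    sorted (take (Suc (Suc k)) x) \<longleftrightarrow> sorted (take (Suc k) x) \<and> x ! k \<le> x ! Suc k"
  by (auto simp: sorted_iff_nth_Suc less_Suc_eq)

lemma sorted_layer_rotate_lift_less:
  assumes "2 \<le> length y" "rotate_lift y = map (\<lambda>v. v + c) x" "pair_sum pair_weight y \<noteq> 0"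
  shows "sorted_layer x (length x) < sorted_layer y 1"
proof -
  have "x \<noteq> []" using assms(2) by (auto simp: rotate_lift_def)
  then have "rotate_lift (rotate_lift y) = map (\<lambda>v. v + c) (rotate_lift x)"
    by (simp add: assms(2) rotate_lift_shift)
  then have "\<not> (sorted (rotate_lift y) \<and> sorted (rotate_lift x))"
    using sorted_rotate_lift_twice[OF assms(1)] assms(3) by (metis sorted_shift)
  moreover have "sorted (rotate_lift y) \<longleftrightarrow> sorted x"
    by (simp add: assms(2) sorted_shift)
  moreover have "sorted (take 1 y)" by (cases y) auto
  ultimately show ?thesis by (auto simp: sorted_layer_def)
qed

lemma flat_sum_eq_0:
  fixes xs :: "int list"
  assumes "\<forall>z\<in>set xs. c \<le> z \<and> z \<le> c + 1" "sum_list xs = 0"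
  shows "\<forall>z\<in>set xs. z = 0"
proof (cases "0 \<le> c")
  case True
  then show ?thesis using assms by (subst (asm) sum_list_nonneg_eq_0_iff) auto
next
  case False
  then have "\<forall>z\<in>set (map uminus xs). 0 \<le> z" using assms(1) by auto
  moreover have "sum_list (map uminus xs) = 0"
    using assms(2) uminus_sum_list_map[of "\<lambda>z. z" xs] by (simp add: o_def)
  ultimately show ?thesis by (subst (asm) sum_list_nonneg_eq_0_iff) auto
qed

lemma potential_eq_0_initial:
  assumes "(bs, d, 0, M + 1) \<in> bdm_states M" "potential (bs, d, 0, M + 1) = 0"
  shows "(bs, d, 0, M + 1) = init_state M"
proof -
  have len: "length bs = M" and "d + sum_list bs = 0" using bdm_statesD[OF assms(1)] by auto
  then have x: "xvec (bs, d, 0, M + 1) = bs @ [d]" and "sum_list (bs @ [d]) = 0" by simp_all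
  obtain a r where "bs @ [d] = a # r" by (cases bs) auto
  then have "\<forall>z\<in>set (bs @ [d]). a \<le> z \<and> z \<le> a + 1"
    using pair_sum_pair_weight_Cons_eq_0[of a r] assms(2) x by (simp add: potential_def)
  then have "\<forall>z\<in>set (bs @ [d]). z = 0" using flat_sum_eq_0 \<open>sum_list (bs @ [d]) = 0\<close> by blast
  then show ?thesis using len by (auto simp: init_state_def intro: replicate_eqI)
qed

lemma descent_rank_advance:
  assumes "k < length bs" "d \<le> bs ! k" "xvec (bs', d', T, Suc (Suc k)) = xvec (bs, d, T, Suc k)"
  shows "descent_rank M (bs, d, T, Suc k) < descent_rank M (bs', d', T, Suc (Suc k))"
proof -
  let ?x = "xvec (bs, d, T, Suc k)"
  have "?x ! k = d" "?x ! Suc k = bs ! k" "Suc k < length ?x"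
    using assms(1) by (simp_all add: xvec_at nth_append del: xvec_simp)
  then have "sorted_layer ?x (Suc (Suc k)) = sorted_layer ?x (Suc k)"
    using assms(2) sorted_take_Suc_Suc[of k ?x] by (simp add: sorted_layer_def del: xvec_simp)
  then show ?thesis
    using assms(3) by (simp add: descent_rank_def potential_def del: xvec_simp)
qed

lemma descent_rank_wrap_less:
  assumes "1 \<le> M" "length bs = M" "potential (bs, d, T, M + 1) \<noteq> 0"
    and rot: "rotate_lift (xvec (bs', d', T', 1)) = map (\<lambda>v. v + c) (xvec (bs, d, T, M + 1))"
  shows "descent_rank M (bs, d, T, M + 1) < descent_rank M (bs', d', T', 1)"
proof -
  have pot: "potential (bs', d', T', 1) = potential (bs, d, T, M + 1)"
    using potential_eq_if_rotate_lift[OF rot] .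
  have "length bs' = M"
    using assms(2) arg_cong[OF rot, of length] by (simp add: rotate_lift_def)
  then have "sorted_layer (xvec (bs, d, T, M + 1)) (M + 1) < sorted_layer (xvec (bs', d', T', 1)) 1"
    using sorted_layer_rotate_lift_less[OF _ rot] assms pot by (simp add: potential_def)
  moreover have "(M + 1) * l + (M + 1) < (M + 1) * l' + 1" if "l < l'" for l l' :: nat
    using mult_le_mono2[of "l + 1" l' "M + 1"] that by simp
  ultimately show ?thesis
    using assms(3) pot by (simp add: descent_rank_def del: xvec_simp)
qed

lemma descent_rank_dminus_less:
  assumes "1 \<le> M" "(bs, d, T, M + 1) \<in> bdm_states M" "(bs, d, T, M + 1) \<noteq> init_state M"
    and "T < int M"
  shows "descent_rank M (bs, d, T, M + 1) < descent_rank M (bs, d - 1, T + 1, 1)"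
proof -
  have len: "length bs = M" and "0 \<le> T" using bdm_statesD[OF assms(2)] by auto
  have rot: "rotate_lift (xvec (bs, d - 1, T + 1, 1)) = xvec (bs, d, T, M + 1)"
    using rotate_lift_xvec_dminus len by blast
  then have pot: "potential (bs, d - 1, T + 1, 1) = potential (bs, d, T, M + 1)"
    using potential_eq_if_rotate_lift[where c = 0] by simp
  show ?thesis
  proof (cases "potential (bs, d, T, M + 1) = 0")
    case True
    then have "T \<noteq> 0" using potential_eq_0_initial assms(2,3) by auto
    then obtain n where "nat T = Suc n" "nat (T + 1) = Suc (Suc n)"
      using \<open>0 \<le> T\<close> by (cases "nat T") auto
    then show ?thesis using True pot \<open>T \<noteq> 0\<close> \<open>0 \<le> T\<close> by (simp add: descent_rank_def)
  next
    case False
    then show ?thesis using descent_rank_wrap_less[where c = 0, OF _ len] rot assms(1) by simp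
  qed
qed

lemma descent_rank_bplus_less:
  assumes "1 \<le> M" "length bs = M"
  shows "descent_rank M (bs, d, int M, M + 1) < descent_rank M (map (\<lambda>x. x + 1) bs, d, 0, 1)"
proof -
  have rot: "rotate_lift (xvec (map (\<lambda>x. x + 1) bs, d, 0, 1)) =
      map (\<lambda>v. v + 1) (xvec (bs, d, int M, M + 1))"
    using rotate_lift_xvec_bplus assms(2) by blast
  then have pot: "potential (map (\<lambda>x. x + 1) bs, d, 0, 1) = potential (bs, d, int M, M + 1)"
    by (rule potential_eq_if_rotate_lift)
  show ?thesis
  proof (cases "potential (bs, d, int M, M + 1) = 0")
    case True
    then show ?thesis
      using pot assms(1) by (simp add: descent_rank_def nat_diff_distrib algebra_simps)
  next
    case False
    then show ?thesis using descent_rank_wrap_less[OF _ assms(2) _ rot] assms(1) by simp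
  qed
qed

lemma descent_rank_step_less:
  assumes "1 \<le> M" "u \<in> bdm_states M" "step M u a s" "a \<in> good_actions" "a \<noteq> ActI"
    and "u \<noteq> init_state M"
  shows "descent_rank M u < descent_rank M s"
proof -
  obtain bs d T t where u: "u = (bs, d, T, t)" by (cases u)
  have len: "length bs = M" using bdm_statesD assms(2) u by blast
  from assms(2-4)[unfolded u] show ?thesis
  proof (cases rule: step_goodE)
    case (D k)
    then show ?thesis by (simp add: u descent_rank_advance xvec_exchange del: xvec_simp)
  next
    case (Neq k)
    then have "xvec (bs, d, T, Suc (Suc k)) = xvec (bs, d, T, Suc k)"
      by (simp add: xvec_at xvec_after del: xvec_simp)
    then show ?thesis using Neq by (simp add: u descent_rank_advance)
  next
    case (I k)
    then show ?thesis using assms(5) by simp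
  next
    case Dminus
    then show ?thesis using descent_rank_dminus_less assms(1,2,6) len u by simp
  next
    case Bplus
    then show ?thesis using descent_rank_bplus_less assms(1) len u by simp
  qed
qed

lemma good_path_exists:
  assumes "1 \<le> M" "s \<in> bdm_states M"
  shows "\<exists>p. good_path M s p"
  using assms(2)
proof (induction s rule: wf_induct[OF wf_measures[of "[\<lambda>s. nat (potential s), descent_rank M]"]])
  case (1 s)
  show ?case
  proof (cases "s = init_state M")
    case True
    then show ?thesis using good_path_Nil by blast
  next
    case False
    let ?u = "pred_state M s" and ?a = "pred_action M s"
    have u: "?u \<in> bdm_states M" "step M ?u ?a s" "?a \<in> good_actions"
      using pred_state_step[OF "1.prems"] by auto
    have "\<exists>p. good_path M ?u p"
    proof (cases "?u = init_state M")
      case True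
      then show ?thesis using good_path_Nil by blast
    next
      case False
      have "potential s = potential ?u + of_bool (?a = ActI)"
        using potential_step[OF u] .
      moreover have "?a \<noteq> ActI \<Longrightarrow> descent_rank M ?u < descent_rank M s"
        using descent_rank_step_less[OF assms(1) u] False by blast
      ultimately have "(?u, s) \<in> measures [\<lambda>s. nat (potential s), descent_rank M]"
        using pair_sum_pair_weight_nonneg[of "xvec ?u"]
        by (cases "?a = ActI") (auto simp: potential_def)
      then show ?thesis using "1.IH" u(1) by blast
    qed
    then obtain p where p: "good_path M ?u p" ..
    then have "path_end (init_state M) p = ?u" by (simp add: good_path_iff)
    then have "good_path M s (p @ [(?a, s)])"
      using p u False by (simp add: good_path_snoc)
    then show ?thesis ..
  qed
qed

theorem mainTheorem5:
  fixes M q :: nat and s :: state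
  assumes "M \<ge> 1" and "q \<ge> 2" and "s \<in> bdm_states M"
  shows "int (count_I (alpha M s)) = class_K M s"
proof -
  have "\<exists>!p. good_path M s p"
    using good_path_exists[OF assms(1,3)] good_path_unique by blast
  then have "good_path M s (alpha M s)"
    unfolding alpha_def by (rule theI')
  then have "int (count_I (alpha M s)) = potential s - potential (init_state M)"
    using count_I_eq_potential_diff[of M "init_state M" "alpha M s"] by (auto simp: good_path_iff)
  also have "\<dots> = class_K M s"
    using assms(3) class_K_eq_potential[of s M]
    by (cases s) (simp add: potential_init_state bdm_states_def)
  finally show ?thesis .
qed

end
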